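(* Let $\lambda_v>0$, $r_v>0$, $\rho_v=\lambda_v/r_v$ for $v\in V$, and assume $\sum_{v'\in\bar{\mathcal A}(v)}\rho_{v'}<1$ for all $v\in V$. Under the proportional fair allocation, $N(t)$ is a reversible, positive recurrent Markov process with stationary distribution $$\pi(n)=\frac{1}{c(\rho)}\prod_{v\in V}\rho_v^{n_v}\binom{\sum_{v'\in\bar{\mathcal D}(v)}n_{v'}}{n_v},\qquad n\in\mathbb N^{V},$$ where $$c(\rho)=\prod_{v\in V}\frac{1-\sum_{v'\in\mathcal A(v)}\rho_{v'}}{1-\sum_{v'\in\bar{\mathcal A}(v)}\rho_{v'}}.$$ Moreover, in stationarity, for every $v\in V$, $$\mathbb E[N_v(t)]=\rho_v\sum_{v'\in\bar{\mathcal D}(v)}\frac{1-d(v')}{1-\sum_{v''\in\bar{\mathcal A}(v')}\rho_{v''}},\qquad \psi_v=\frac{\lambda_v}{\mathbb E[N_v(t)]}=r_v\Big[\sum_{v'\in\bar{\mathcal D}(v)}\frac{1-d(v')}{1-\sum_{v''\in\bar{\mathcal A}(v')}\rho_{v''}}\Big]^{-1}.$$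
   Context: $G=(V,E)$ is a finite directed rooted tree with vertex set $V=\{1,\dots,|V|\}$ and root $1$, edges oriented from parent to child. For $v\in V$: $\mathcal A(v)$ is the set of strict ancestors of $v$, $\bar{\mathcal A}(v)=\mathcal A(v)\cup\{v\}$, $\mathcal D(v)$ is the set of strict descendants of $v$, $\bar{\mathcal D}(v)=\mathcal D(v)\cup\{v\}$, and $d(v)$ is the number of children of $v$. $N(t)\in\mathbb N^V$ is the continuous-time Markov chain with transition rates $n\to n+e^v$ at rate $\lambda_v$ and $n\to n-e^v$ at rate $r_v\gamma_v(n)\mathbf 1\{n_v\ge1\}$ ($e^v$ the $v$-th canonical basis vector). The proportional fair allocation is $\gamma_v(n)=\frac{n_v}{\sum_{v'\in\bar{\mathcal D}(v)}n_{v'}}\prod_{a\in\mathcal A(v)}\frac{\sum_{v'\in\mathcal D(a)}n_{v'}}{\sum_{v'\in\bar{\mathcal D}(a)}n_{v'}}$ when $n_v\ge1$ (all denominators are then positive) and $\gamma_v(n)=0$ when $n_v=0$. $\psi_v=\lambda_v/\mathbb E[N_v(t)]$ is the flow throughput of beam $v$. *)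

theory Defs
  imports "HOL-Analysis.Analysis"
begin

text \<open>Vertex set V = {1..m}; the tree is given by its (parent-to-child) edge set E.\<close>

definition is_rooted_tree :: "nat \<Rightarrow> (nat \<times> nat) set \<Rightarrow> bool" where
  "is_rooted_tree m E \<longleftrightarrow> 1 \<le> m \<and> E \<subseteq> {1..m} \<times> {1..m}
     \<and> (\<forall>u. (u, 1) \<notin> E)
     \<and> (\<forall>v\<in>{1..m}. v \<noteq> 1 \<longrightarrow> (\<exists>!u. (u, v) \<in> E))
     \<and> (\<forall>v\<in>{1..m}. (1, v) \<in> E\<^sup>*)"

definition anc :: "(nat \<times> nat) set \<Rightarrow> nat \<Rightarrow> nat set" where
  "anc E v = {a. (a, v) \<in> E\<^sup>+}"

definition ancb :: "(nat \<times> nat) set \<Rightarrow> nat \<Rightarrow> nat set" where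
  "ancb E v = insert v (anc E v)"

definition desc :: "(nat \<times> nat) set \<Rightarrow> nat \<Rightarrow> nat set" where
  "desc E v = {w. (v, w) \<in> E\<^sup>+}"

definition descb :: "(nat \<times> nat) set \<Rightarrow> nat \<Rightarrow> nat set" where
  "descb E v = insert v (desc E v)"

definition nchild :: "(nat \<times> nat) set \<Rightarrow> nat \<Rightarrow> nat" where
  "nchild E v = card {w. (v, w) \<in> E}"

text \<open>State space N^V, as finitely supported functions vanishing outside V.\<close>
definition states :: "nat \<Rightarrow> (nat \<Rightarrow> nat) set" where
  "states m = {n. \<forall>v. v \<notin> {1..m} \<longrightarrow> n v = 0}"

definition pf_alloc :: "(nat \<times> nat) set \<Rightarrow> nat \<Rightarrow> (nat \<Rightarrow> nat) \<Rightarrow> real" where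
  "pf_alloc E v n = (if 1 \<le> n v then
      real (n v) / (\<Sum>u\<in>descb E v. real (n u))
      * (\<Prod>a\<in>anc E v. (\<Sum>u\<in>desc E a. real (n u)) / (\<Sum>u\<in>descb E a. real (n u)))
    else 0)"

text \<open>Transition rate q(n, n') of the CTMC (for n' \<noteq> n).\<close>
definition rate :: "nat \<Rightarrow> (nat \<times> nat) set \<Rightarrow> (nat \<Rightarrow> real) \<Rightarrow> (nat \<Rightarrow> real)
                    \<Rightarrow> (nat \<Rightarrow> nat) \<Rightarrow> (nat \<Rightarrow> nat) \<Rightarrow> real" where
  "rate m E lam r n n' = (\<Sum>v\<in>{1..m}.
      (if n' = n(v := Suc (n v)) then lam v else 0)
    + (if 1 \<le> n v \<and> n' = n(v := n v - 1) then r v * pf_alloc E v n else 0))"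

definition cnorm :: "nat \<Rightarrow> (nat \<times> nat) set \<Rightarrow> (nat \<Rightarrow> real) \<Rightarrow> real" where
  "cnorm m E \<rho> = (\<Prod>v\<in>{1..m}. (1 - (\<Sum>u\<in>anc E v. \<rho> u)) / (1 - (\<Sum>u\<in>ancb E v. \<rho> u)))"

definition pf_stat :: "nat \<Rightarrow> (nat \<times> nat) set \<Rightarrow> (nat \<Rightarrow> real) \<Rightarrow> (nat \<Rightarrow> nat) \<Rightarrow> real" where
  "pf_stat m E \<rho> n = (1 / cnorm m E \<rho>) *
     (\<Prod>v\<in>{1..m}. \<rho> v ^ n v * real ((\<Sum>u\<in>descb E v. n u) choose n v))"

end

theory Submission
  imports Defs
begin

text \<open>
  Let S_u(n) be the number of flows in the subtree of u.  Raising n_v by one multiplies the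
  weight \<Prod>_u \<rho>_u^(n_u) (S_u(n) choose n_u) by \<rho>_v / \<gamma>_v(n + e_v): the binomial at v grows by
  (S_v + 1) / (n_v + 1) and the one at each ancestor a by (S_a + 1) / (S_a + 1 - n_a), the
  reciprocals of the factors of the proportional fair allocation.  This is detailed balance.

  The weight is summed one coordinate at a time, always over a vertex r none of whose ancestors
  is left.  Then n_r occurs only in x^(n_r) (n_r + T choose n_r), where T counts the flows
  strictly below r and x = \<rho>_r / (1 - load of the ancestors of r); this negative binomial series
  sums to (1 - x)^(-T-1), and the factor (1 - x)^(-T) is absorbed by lowering the capacity seen
  by the descendants of r by \<rho>_r.  The means come out in the same way from the mean of the
  negative binomial law together with the recursion \<mu>_r (1 - R_r) = \<rho>_r (1 + \<Sum>_(u below r) \<mu>_u),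
  R_r being the load on the path to r, which holds because 1 - d(u) sums to 1 over every subtree.
\<close>

section \<open>Rooted trees\<close>

locale rooted_tree =
  fixes m :: nat and E :: "(nat \<times> nat) set"
  assumes tree: "is_rooted_tree m E"
begin

lemma edge_in_vertices: "(a, b) \<in> E \<Longrightarrow> a \<in> {1..m} \<and> b \<in> {1..m}"
  using tree unfolding is_rooted_tree_def by blast

lemma trancl_in_vertices: "(a, b) \<in> E\<^sup>+ \<Longrightarrow> a \<in> {1..m} \<and> b \<in> {1..m}"
  by (induction rule: trancl_induct) (use edge_in_vertices in blast)+

lemma anc_subset: "anc E v \<subseteq> {1..m}"
  using trancl_in_vertices by (auto simp: anc_def)

lemma desc_subset: "desc E v \<subseteq> {1..m}"
  using trancl_in_vertices by (auto simp: desc_def)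

lemma finite_anc: "finite (anc E v)"
  using anc_subset by (rule finite_subset) simp

lemma finite_desc: "finite (desc E v)"
  using desc_subset by (rule finite_subset) simp

lemma finite_descb: "finite (descb E v)"
  by (simp add: descb_def finite_desc)

lemma parent_unique:
  assumes "(a, c) \<in> E" "(b, c) \<in> E"
  shows "a = b"
proof -
  have "c \<in> {1..m}" "c \<noteq> 1"
    using edge_in_vertices[OF assms(1)] assms(1) tree unfolding is_rooted_tree_def by blast+
  then have "\<exists>!u. (u, c) \<in> E"
    using tree unfolding is_rooted_tree_def by blast
  with assms show ?thesis by blast
qed

lemma acyclic_edges: "acyclic E"
  unfolding acyclic_def
proof (intro allI notI)
  fix v assume cycle: "(v, v) \<in> E\<^sup>+"
  have "(1, v) \<in> E\<^sup>*"
    using trancl_in_vertices[OF cycle] tree unfolding is_rooted_tree_def by blast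
  \<comment> \<open>Walking down from the root: the unique parent of a vertex on a cycle is on the cycle.\<close>
  then show False using cycle
  proof (induction rule: rtrancl_induct)
    case base
    then show ?case using tree unfolding is_rooted_tree_def by (metis tranclE)
  next
    case (step y z)
    from step.prems obtain u where "(z, u) \<in> E\<^sup>*" "(u, z) \<in> E"
      by (meson rtranclE tranclD2 trancl_into_rtrancl)
    moreover have "u = y" using parent_unique \<open>(u, z) \<in> E\<close> step.hyps(2) .
    ultimately have "(y, y) \<in> E\<^sup>+" using step.hyps(2)
      by (meson rtrancl_into_trancl2)
    then show False by (rule step.IH)
  qed
qed

lemma not_anc_self: "v \<notin> anc E v"
  using acyclic_edges by (simp add: anc_def acyclic_def)

lemma not_desc_self: "v \<notin> desc E v"
  using acyclic_edges by (simp add: desc_def acyclic_def)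

lemma ancestors_linear:
  assumes "(a, v) \<in> E\<^sup>+" "(b, v) \<in> E\<^sup>+"
  shows "a = b \<or> (a, b) \<in> E\<^sup>+ \<or> (b, a) \<in> E\<^sup>+"
  using assms
proof (induction arbitrary: b rule: trancl_induct)
  case (base y)
  from base.prems show ?case
    by (cases rule: tranclE) (use parent_unique \<open>(a, y) \<in> E\<close> in blast)+
next
  case (step y z)
  from step.prems show ?case
  proof (cases rule: tranclE)
    case base
    then show ?thesis using parent_unique step.hyps by blast
  next
    case (step c)
    then have "c = y" using parent_unique \<open>(y, z) \<in> E\<close> by blast
    then show ?thesis using step.IH step by blast
  qed
qed

lemma desc_eq_UN_children: "desc E v = (\<Union>w\<in>descb E v. {c. (w, c) \<in> E})"
proof
  show "desc E v \<subseteq> (\<Union>w\<in>descb E v. {c. (w, c) \<in> E})"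
  proof
    fix c assume "c \<in> desc E v"
    then obtain w where w: "(v, w) \<in> E\<^sup>*" "(w, c) \<in> E"
      unfolding desc_def by (meson mem_Collect_eq tranclD2)
    from w(1) have "w \<in> descb E v"
      unfolding descb_def desc_def by (auto dest: rtranclD)
    with w(2) show "c \<in> (\<Union>w\<in>descb E v. {c. (w, c) \<in> E})" by blast
  qed
  show "(\<Union>w\<in>descb E v. {c. (w, c) \<in> E}) \<subseteq> desc E v"
    unfolding descb_def desc_def by (blast intro: trancl_into_trancl)
qed

lemma sum_descb_one_minus_nchild: "(\<Sum>w\<in>descb E v. 1 - real (nchild E w)) = 1"
proof -
  have finite_children: "finite {c. (w, c) \<in> E}" for w
    by (rule finite_subset[of _ "{1..m}"]) (use edge_in_vertices in auto)
  have "card (desc E v) = (\<Sum>w\<in>descb E v. card {c. (w, c) \<in> E})"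
    unfolding desc_eq_UN_children
    by (rule card_UN_disjoint) (use finite_children finite_descb parent_unique in auto)
  then have "(\<Sum>w\<in>descb E v. nchild E w) = card (desc E v)"
    by (simp add: nchild_def)
  then show ?thesis
    using not_desc_self[of v] finite_desc[of v]
    by (simp add: sum_subtractf descb_def flip: of_nat_sum)
qed

end


section \<open>Loads along paths and the recursion for the means\<close>

definition path_load :: "(nat \<times> nat) set \<Rightarrow> (nat \<Rightarrow> real) \<Rightarrow> nat \<Rightarrow> real" where
  "path_load E \<rho> v = (\<Sum>u\<in>ancb E v. \<rho> u)"

definition mean_flows :: "(nat \<times> nat) set \<Rightarrow> (nat \<Rightarrow> real) \<Rightarrow> nat \<Rightarrow> real" where
  "mean_flows E \<rho> v =
     \<rho> v * (\<Sum>u\<in>descb E v. (1 - real (nchild E u)) / (1 - path_load E \<rho> u))"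

lemma mem_descb_iff_mem_ancb: "w \<in> descb E u \<longleftrightarrow> u \<in> ancb E w"
  by (auto simp: descb_def ancb_def desc_def anc_def)

context rooted_tree
begin

lemma path_load_eq: "path_load E \<rho> v = \<rho> v + (\<Sum>u\<in>anc E v. \<rho> u)"
  unfolding path_load_def ancb_def using finite_anc not_anc_self by simp

lemma path_load_desc:
  assumes "w \<in> desc E v"
  shows "path_load E \<rho> w = path_load E \<rho> v + (\<Sum>u\<in>desc E v \<inter> ancb E w. \<rho> u)"
proof -
  have vw: "(v, w) \<in> E\<^sup>+" using assms by (simp add: desc_def)
  have "ancb E w = ancb E v \<union> (desc E v \<inter> ancb E w)"
  proof
    show "ancb E w \<subseteq> ancb E v \<union> (desc E v \<inter> ancb E w)"
      using ancestors_linear[OF _ vw] assms by (auto simp: ancb_def anc_def desc_def)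
    show "ancb E v \<union> (desc E v \<inter> ancb E w) \<subseteq> ancb E w"
      using vw by (auto simp: ancb_def anc_def)
  qed
  then have "path_load E \<rho> w = (\<Sum>u\<in>ancb E v \<union> (desc E v \<inter> ancb E w). \<rho> u)"
    by (simp add: path_load_def)
  also have "\<dots> = path_load E \<rho> v + (\<Sum>u\<in>desc E v \<inter> ancb E w. \<rho> u)"
  proof -
    have "ancb E v \<inter> desc E v = {}"
      using acyclic_edges by (auto simp: ancb_def anc_def desc_def acyclic_def dest: trancl_trans)
    then show ?thesis
      unfolding path_load_def by (intro sum.union_disjoint) (auto simp: ancb_def finite_anc finite_desc)
  qed
  finally show ?thesis .
qed

lemma sum_desc_descb_swap:
  "(\<Sum>u\<in>desc E v. \<rho> u * (\<Sum>w\<in>descb E u. g w))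
   = (\<Sum>w\<in>desc E v. g w * (path_load E \<rho> w - path_load E \<rho> v))"
proof -
  have "(\<Sum>u\<in>desc E v. \<rho> u * (\<Sum>w\<in>descb E u. g w))
      = (\<Sum>u\<in>desc E v. \<Sum>w\<in>{w\<in>desc E v. w \<in> descb E u}. \<rho> u * g w)"
  proof (rule sum.cong[OF refl])
    fix u assume "u \<in> desc E v"
    then have "{w\<in>desc E v. w \<in> descb E u} = descb E u"
      by (auto simp: descb_def desc_def)
    then show "\<rho> u * (\<Sum>w\<in>descb E u. g w) = (\<Sum>w\<in>{w\<in>desc E v. w \<in> descb E u}. \<rho> u * g w)"
      by (simp add: sum_distrib_left)
  qed
  also have "\<dots> = (\<Sum>w\<in>desc E v. \<Sum>u\<in>{u\<in>desc E v. w \<in> descb E u}. \<rho> u * g w)"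
    by (rule sum.swap_restrict) (simp_all add: finite_desc)
  also have "\<dots> = (\<Sum>w\<in>desc E v. g w * (path_load E \<rho> w - path_load E \<rho> v))"
  proof (rule sum.cong[OF refl])
    fix w assume "w \<in> desc E v"
    moreover have "{u\<in>desc E v. w \<in> descb E u} = desc E v \<inter> ancb E w"
      by (auto simp: mem_descb_iff_mem_ancb)
    ultimately show "(\<Sum>u\<in>{u\<in>desc E v. w \<in> descb E u}. \<rho> u * g w)
        = g w * (path_load E \<rho> w - path_load E \<rho> v)"
      by (simp add: path_load_desc sum_distrib_right[symmetric] mult.commute)
  qed
  finally show ?thesis .
qed

lemma mean_flows_rec:
  assumes "\<And>w. w \<in> descb E v \<Longrightarrow> path_load E \<rho> w \<noteq> 1"
  shows "mean_flows E \<rho> v * (1 - path_load E \<rho> v)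
       = \<rho> v * (1 + (\<Sum>u\<in>desc E v. mean_flows E \<rho> u))"
proof -
  define f where "f w = (1 - real (nchild E w)) / (1 - path_load E \<rho> w)" for w
  define c where "c = 1 - path_load E \<rho> v"
  have f_mult: "f w * (1 - path_load E \<rho> w) = 1 - real (nchild E w)" if "w \<in> descb E v" for w
    using assms[OF that] by (simp add: f_def)
  have v_notin: "v \<notin> desc E v" by (rule not_desc_self)
  have "(\<Sum>w\<in>desc E v. 1 - real (nchild E w)) = real (nchild E v)"
    using sum_descb_one_minus_nchild[of v] v_notin finite_desc by (simp add: descb_def)
  moreover have "(\<Sum>u\<in>desc E v. mean_flows E \<rho> u)
      = (\<Sum>w\<in>desc E v. c * f w - (1 - real (nchild E w)))"
  proof -
    have "f w * (path_load E \<rho> w - path_load E \<rho> v) = c * f w - (1 - real (nchild E w))"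
      if "w \<in> desc E v" for w
      using f_mult[of w] that by (simp add: descb_def c_def algebra_simps)
    then show ?thesis
      unfolding mean_flows_def f_def[symmetric] sum_desc_descb_swap by (intro sum.cong) auto
  qed
  ultimately have sum_mean: "c * (\<Sum>w\<in>desc E v. f w) = (\<Sum>u\<in>desc E v. mean_flows E \<rho> u) + real (nchild E v)"
    by (simp add: sum_subtractf sum_distrib_left)
  have f_root: "c * f v = 1 - real (nchild E v)"
    using f_mult[of v] by (simp add: c_def descb_def mult.commute)
  have "mean_flows E \<rho> v * c = \<rho> v * (c * f v + c * (\<Sum>w\<in>desc E v. f w))"
    using v_notin finite_desc by (simp add: mean_flows_def f_def descb_def algebra_simps)
  also have "\<dots> = \<rho> v * (1 + (\<Sum>u\<in>desc E v. mean_flows E \<rho> u))"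
    unfolding f_root sum_mean by simp
  finally show ?thesis unfolding c_def .
qed

end

section \<open>Negative binomial series and summation over one coordinate\<close>

lemma negative_binomial_has_sum:
  fixes x :: real
  assumes "0 \<le> x" "x < 1"
  shows "((\<lambda>k. x ^ k * real ((k + t) choose k)) has_sum 1 / (1 - x) ^ (t + 1)) UNIV"
proof -
  have "(\<lambda>k. (- real (t + 1) gchoose k) * (- x) ^ k) sums (1 + - x) powr (- real (t + 1))"
    by (rule gen_binomial_real) (use assms in simp)
  moreover have "(- real (t + 1) gchoose k) * (- x) ^ k = x ^ k * real ((k + t) choose k)" for k
  proof -
    have "(- real (t + 1) gchoose k) = (- 1) ^ k * ((real k + real t) gchoose k)"
      by (subst gbinomial_negated_upper) (simp add: algebra_simps)
    also have "(real k + real t) gchoose k = real ((k + t) choose k)"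
      by (simp add: binomial_gbinomial)
    finally show ?thesis
      by (simp add: power_minus_mult mult_ac flip: power_mult_distrib)
  qed
  moreover have "(1 + - x) powr (- real (t + 1)) = 1 / (1 - x) ^ (t + 1)"
    using assms by (simp add: powr_minus powr_realpow divide_inverse del: of_nat_Suc)
  ultimately have "(\<lambda>k. x ^ k * real ((k + t) choose k)) sums (1 / (1 - x) ^ (t + 1))"
    by simp
  then show ?thesis
    using assms by (intro sums_nonneg_imp_has_sum) auto
qed

lemma negative_binomial_mean_has_sum:
  fixes x :: real
  assumes "0 \<le> x" "x < 1"
  shows "((\<lambda>k. real k * (x ^ k * real ((k + t) choose k)))
           has_sum x * real (t + 1) / (1 - x) ^ (t + 2)) UNIV"
proof -
  have shift: "x * real (t + 1) * (x ^ j * real ((j + (t + 1)) choose j))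
      = real (Suc j) * (x ^ Suc j * real ((Suc j + t) choose Suc j))" for j
  proof -
    have "Suc j * ((Suc j + t) choose Suc j) = (t + 1) * ((j + (t + 1)) choose j)"
      using Suc_times_binomial_add by simp
    then have "real (Suc j) * real ((Suc j + t) choose Suc j) = real (t + 1) * real ((j + (t + 1)) choose j)"
      by (metis of_nat_mult)
    moreover have "\<And>s c t' c' :: real. s * c = t' * c' \<Longrightarrow> x * t' * (x ^ j * c') = s * (x ^ Suc j * c)"
      by (simp add: algebra_simps)
    ultimately show ?thesis by blast
  qed
  have "(\<lambda>j. x * real (t + 1) * (x ^ j * real ((j + (t + 1)) choose j)))
          sums (x * real (t + 1) * (1 / (1 - x) ^ (t + 2)))"
    using has_sum_imp_sums[OF negative_binomial_has_sum[OF assms, of "t + 1"]]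
    by (intro sums_mult) simp
  then have "(\<lambda>j. real (Suc j) * (x ^ Suc j * real ((Suc j + t) choose Suc j)))
               sums (x * real (t + 1) / (1 - x) ^ (t + 2))"
    unfolding shift by simp
  then have "(\<lambda>k. real k * (x ^ k * real ((k + t) choose k))) sums (x * real (t + 1) / (1 - x) ^ (t + 2))"
    by (rule sums_Suc_imp[rotated]) simp
  then show ?thesis
    using assms by (intro sums_nonneg_imp_has_sum) auto
qed

lemma has_sum_sum:
  fixes f :: "'i \<Rightarrow> 'a \<Rightarrow> real"
  assumes "finite I" "\<And>i. i \<in> I \<Longrightarrow> (f i has_sum s i) A"
  shows "((\<lambda>x. \<Sum>i\<in>I. f i x) has_sum (\<Sum>i\<in>I. s i)) A"
  using assms by (induction I rule: finite_induct) (auto intro: has_sum_add)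

definition states_on :: "nat set \<Rightarrow> (nat \<Rightarrow> nat) set" where
  "states_on V = {n. \<forall>v. v \<notin> V \<longrightarrow> n v = 0}"

lemma has_sum_states_on_remove:
  fixes f :: "(nat \<Rightarrow> nat) \<Rightarrow> real"
  assumes r: "r \<in> V"
    and nonneg: "\<And>n. n \<in> states_on V \<Longrightarrow> 0 \<le> f n"
    and inner: "\<And>n. n \<in> states_on (V - {r}) \<Longrightarrow> ((\<lambda>k. f (n(r := k))) has_sum g n) UNIV"
    and outer: "(g has_sum s) (states_on (V - {r}))"
  shows "(f has_sum s) (states_on V)"
proof -
  let ?h = "\<lambda>p. f ((fst p)(r := snd p))"
  have inner': "\<And>n. n \<in> states_on (V - {r}) \<Longrightarrow> ((\<lambda>k. ?h (n, k)) has_sum g n) UNIV"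
    using inner by simp
  have upd: "n(r := k) \<in> states_on V" if "n \<in> states_on (V - {r})" for n k
    using that r by (auto simp: states_on_def)
  have summable: "?h summable_on states_on (V - {r}) \<times> UNIV"
  proof (rule summable_on_SigmaI[OF inner' has_sum_imp_summable[OF outer]])
    show "0 \<le> ?h (n, k)" if "n \<in> states_on (V - {r})" for n k
      using nonneg[OF upd[OF that]] by simp
  qed
  have sigma: "(?h has_sum s) (states_on (V - {r}) \<times> UNIV)"
    by (rule has_sum_SigmaI[OF inner' outer summable])
  have bij: "bij_betw (\<lambda>p. (fst p)(r := snd p)) (states_on (V - {r}) \<times> UNIV) (states_on V)"
  proof (rule bij_betwI[where g = "\<lambda>n. (n(r := 0), n r)"])
    show "(\<lambda>p. (fst p)(r := snd p)) ((\<lambda>n. (n(r := 0), n r)) n) = n" for n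
      by simp
    show "(\<lambda>n. (n(r := 0), n r)) ((\<lambda>p. (fst p)(r := snd p)) p) = p" if "p \<in> states_on (V - {r}) \<times> UNIV" for p
      using that r by (cases p) (auto simp: states_on_def fun_eq_iff)
  qed (use r in \<open>auto simp: states_on_def\<close>)
  show ?thesis
    using sigma has_sum_reindex_bij_betw[OF bij, of f s] by simp
qed

section \<open>Summing out the coordinates root first\<close>

definition subtree_count :: "(nat \<times> nat) set \<Rightarrow> (nat \<Rightarrow> nat) \<Rightarrow> nat \<Rightarrow> nat" where
  "subtree_count E n v = (\<Sum>u\<in>descb E v. n u)"

definition tree_weight :: "nat set \<Rightarrow> (nat \<times> nat) set \<Rightarrow> (nat \<Rightarrow> real) \<Rightarrow> (nat \<Rightarrow> nat) \<Rightarrow> real" where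
  "tree_weight V E \<rho> n = (\<Prod>v\<in>V. \<rho> v ^ n v * real (subtree_count E n v choose n v))"

definition residual_capacity :: "(nat \<times> nat) set \<Rightarrow> (nat \<Rightarrow> real) \<Rightarrow> nat set \<Rightarrow> nat \<Rightarrow> real" where
  "residual_capacity E \<rho> V v = 1 - (\<Sum>u\<in>anc E v - V. \<rho> u)"

text \<open>Summing the stationary weight over the coordinates outside a descendant-closed set \<open>V\<close>
  leaves \<open>partial_weight E \<rho> V\<close> times the \<open>norm_factor\<close> of every vertex summed out.\<close>

definition partial_weight :: "(nat \<times> nat) set \<Rightarrow> (nat \<Rightarrow> real) \<Rightarrow> nat set \<Rightarrow> (nat \<Rightarrow> nat) \<Rightarrow> real" where
  "partial_weight E \<rho> V = tree_weight V E (\<lambda>v. \<rho> v / residual_capacity E \<rho> V v)"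

definition norm_factor :: "(nat \<times> nat) set \<Rightarrow> (nat \<Rightarrow> real) \<Rightarrow> nat \<Rightarrow> real" where
  "norm_factor E \<rho> v = (1 - (\<Sum>u\<in>anc E v. \<rho> u)) / (1 - path_load E \<rho> v)"

definition desc_closed :: "(nat \<times> nat) set \<Rightarrow> nat set \<Rightarrow> bool" where
  "desc_closed E V \<longleftrightarrow> (\<forall>v\<in>V. desc E v \<subseteq> V)"

context rooted_tree
begin

lemma exists_root:
  assumes "finite V" "V \<noteq> {}"
  shows "\<exists>r\<in>V. anc E r \<inter> V = {}"
proof -
  obtain r where r: "r \<in> V" and r_max: "\<And>v. v \<in> V \<Longrightarrow> card (desc E v) \<le> card (desc E r)"
  proof -
    let ?M = "Max ((\<lambda>x. card (desc E x)) ` V)"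
    have "?M \<in> (\<lambda>x. card (desc E x)) ` V" using assms by simp
    then obtain r where "r \<in> V" "card (desc E r) = ?M" by auto
    moreover have "card (desc E v) \<le> ?M" if "v \<in> V" for v
      using assms that by simp
    ultimately show ?thesis using that by metis
  qed
  have "card (desc E r) < card (desc E a)" if "a \<in> anc E r" for a
  proof (rule psubset_card_mono[OF finite_desc])
    have "r \<in> desc E a" using that by (simp add: anc_def desc_def)
    moreover have "desc E r \<subseteq> desc E a" using that by (auto simp: anc_def desc_def)
    ultimately show "desc E r \<subset> desc E a" using not_desc_self by blast
  qed
  then have "anc E r \<inter> V = {}" using r_max by (meson disjoint_iff not_le)
  with r show ?thesis by blast
qed

lemma desc_closed_remove_root:
  assumes "desc_closed E V" "anc E r \<inter> V = {}"
  shows "desc_closed E (V - {r})"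
  unfolding desc_closed_def
proof
  fix v assume v: "v \<in> V - {r}"
  then have "r \<notin> desc E v" using assms(2) by (auto simp: anc_def desc_def)
  then show "desc E v \<subseteq> V - {r}" using assms(1) v by (auto simp: desc_closed_def)
qed

lemma subtree_count_upd_self: "subtree_count E (n(v := k)) v = k + (\<Sum>u\<in>desc E v. n u)"
proof -
  have "(\<Sum>u\<in>desc E v. (n(v := k)) u) = (\<Sum>u\<in>desc E v. n u)"
    by (rule sum.cong) (use not_desc_self in auto)
  then show ?thesis
    using not_desc_self finite_desc by (simp add: subtree_count_def descb_def)
qed

lemma subtree_count_upd_other:
  "r \<notin> descb E v \<Longrightarrow> subtree_count E (n(r := k)) v = subtree_count E n v"
  unfolding subtree_count_def by (intro sum.cong) auto

lemma desc_closed_vertices: "desc_closed E {1..m}"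
  using desc_subset by (simp add: desc_closed_def)

end

locale stable_tree = rooted_tree +
  fixes \<rho> :: "nat \<Rightarrow> real"
  assumes rho_nonneg: "v \<in> {1..m} \<Longrightarrow> 0 \<le> \<rho> v"
    and path_load_less_1: "v \<in> {1..m} \<Longrightarrow> path_load E \<rho> v < 1"
begin

lemma anc_load_less_1: "(\<Sum>u\<in>anc E v. \<rho> u) < 1"
proof (cases "v \<in> {1..m}")
  case True
  then show ?thesis using path_load_eq[of \<rho> v] rho_nonneg path_load_less_1 by force
next
  case False
  then have "anc E v = {}" using trancl_in_vertices by (auto simp: anc_def)
  then show ?thesis by simp
qed

lemma mean_flows_eq:
  assumes "v \<in> {1..m}"
  shows "mean_flows E \<rho> v = \<rho> v / (1 - path_load E \<rho> v) * (1 + (\<Sum>u\<in>desc E v. mean_flows E \<rho> u))"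
proof -
  have "path_load E \<rho> w \<noteq> 1" if "w \<in> descb E v" for w
    using that desc_subset[of v] assms path_load_less_1[of w] unfolding descb_def by force
  then have "mean_flows E \<rho> v * (1 - path_load E \<rho> v) = \<rho> v * (1 + (\<Sum>u\<in>desc E v. mean_flows E \<rho> u))"
    by (rule mean_flows_rec)
  moreover have "1 - path_load E \<rho> v \<noteq> 0"
    using path_load_less_1[OF assms] by simp
  ultimately show ?thesis by (simp add: field_simps)
qed

lemma residual_capacity_pos: "0 < residual_capacity E \<rho> V v"
proof -
  have "(\<Sum>u\<in>anc E v - V. \<rho> u) \<le> (\<Sum>u\<in>anc E v. \<rho> u)"
    by (rule sum_mono2) (auto simp: finite_anc intro!: rho_nonneg dest: subsetD[OF anc_subset])
  then show ?thesis using anc_load_less_1[of v] by (simp add: residual_capacity_def)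
qed

lemma partial_weight_nonneg:
  assumes "V \<subseteq> {1..m}"
  shows "0 \<le> partial_weight E \<rho> V n"
  unfolding partial_weight_def tree_weight_def
proof (rule prod_nonneg)
  fix v assume "v \<in> V"
  then have "0 \<le> \<rho> v" using assms rho_nonneg by blast
  then show "0 \<le> (\<rho> v / residual_capacity E \<rho> V v) ^ n v * real (subtree_count E n v choose n v)"
    using residual_capacity_pos[of V v] by simp
qed

context
  fixes V r
  assumes V_sub: "V \<subseteq> {1..m}" and V_closed: "desc_closed E V"
    and r_in: "r \<in> V" and r_root: "anc E r \<inter> V = {}"
begin

lemma desc_root_subset: "desc E r \<subseteq> V - {r}"
  using V_closed r_in not_desc_self by (auto simp: desc_closed_def)

lemma residual_capacity_root: "residual_capacity E \<rho> V r = 1 - (\<Sum>u\<in>anc E r. \<rho> u)"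
  using r_root by (simp add: residual_capacity_def Diff_triv)

lemma residual_capacity_remove_root:
  assumes "v \<in> V - {r}"
  shows "\<rho> v / residual_capacity E \<rho> V v
       = \<rho> v / residual_capacity E \<rho> (V - {r}) v
         * (if v \<in> desc E r then 1 - \<rho> r / residual_capacity E \<rho> V r else 1)"
proof (cases "v \<in> desc E r")
  case True
  have "anc E v - V = anc E r"
  proof
    have rv: "(r, v) \<in> E\<^sup>+" using True by (simp add: desc_def)
    show "anc E v - V \<subseteq> anc E r"
    proof
      fix a assume a: "a \<in> anc E v - V"
      then have "a = r \<or> (a, r) \<in> E\<^sup>+ \<or> (r, a) \<in> E\<^sup>+"
        using ancestors_linear[OF _ rv] by (simp add: anc_def)
      moreover have "(r, a) \<notin> E\<^sup>+" using a V_closed r_in by (auto simp: desc_closed_def desc_def)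
      ultimately show "a \<in> anc E r" using a r_in by (auto simp: anc_def)
    qed
    show "anc E r \<subseteq> anc E v - V" using r_root rv by (auto simp: anc_def)
  qed
  moreover have "anc E v - (V - {r}) = insert r (anc E v - V)"
    using True r_in by (auto simp: anc_def desc_def)
  ultimately have res_V: "residual_capacity E \<rho> V v = residual_capacity E \<rho> V r"
    and res_V': "residual_capacity E \<rho> (V - {r}) v = residual_capacity E \<rho> V r - \<rho> r"
    using finite_anc not_anc_self r_root by (simp_all add: residual_capacity_def Diff_triv)
  have "0 < residual_capacity E \<rho> V r" "0 < residual_capacity E \<rho> V r - \<rho> r"
    using residual_capacity_pos res_V' by metis+
  then show ?thesis using True unfolding res_V res_V' by (simp add: field_simps)
next
  case False
  then have "anc E v - (V - {r}) = anc E v - V"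
    by (auto simp: anc_def desc_def)
  then show ?thesis using False by (simp add: residual_capacity_def)
qed

lemma partial_weight_upd_root:
  "partial_weight E \<rho> V (n(r := k))
   = (\<rho> r / residual_capacity E \<rho> V r) ^ k * real ((k + (\<Sum>u\<in>desc E r. n u)) choose k)
     * ((1 - \<rho> r / residual_capacity E \<rho> V r) ^ (\<Sum>u\<in>desc E r. n u)
        * partial_weight E \<rho> (V - {r}) n)"
proof -
  define x where "x = \<rho> r / residual_capacity E \<rho> V r"
  define q where "q V' v = (\<rho> v / residual_capacity E \<rho> V' v) ^ n v * real (subtree_count E n v choose n v)"
    for V' v
  have finite_V: "finite V" using V_sub finite_subset by blast
  have count_other: "subtree_count E (n(r := k)) v = subtree_count E n v" if "v \<in> V - {r}" for v
    using that r_root by (intro subtree_count_upd_other) (auto simp: descb_def desc_def anc_def)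
  have "partial_weight E \<rho> V (n(r := k))
      = x ^ k * real ((k + (\<Sum>u\<in>desc E r. n u)) choose k) * (\<Prod>v\<in>V - {r}. q V v)"
  proof -
    have "(\<Prod>v\<in>V - {r}. (\<rho> v / residual_capacity E \<rho> V v) ^ (n(r := k)) v
            * real (subtree_count E (n(r := k)) v choose (n(r := k)) v))
        = (\<Prod>v\<in>V - {r}. q V v)"
      by (rule prod.cong) (auto simp: q_def count_other)
    then show ?thesis
      unfolding partial_weight_def tree_weight_def prod.remove[OF finite_V r_in]
      by (simp add: x_def subtree_count_upd_self)
  qed
  also have "(\<Prod>v\<in>V - {r}. q V v)
      = (\<Prod>v\<in>V - {r}. q (V - {r}) v * (if v \<in> desc E r then (1 - x) ^ n v else 1))"
  proof (rule prod.cong[OF refl])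
    fix v assume v: "v \<in> V - {r}"
    show "q V v = q (V - {r}) v * (if v \<in> desc E r then (1 - x) ^ n v else 1)"
      unfolding q_def residual_capacity_remove_root[OF v] x_def[symmetric]
      by (simp add: power_mult_distrib power_divide)
  qed
  also have "\<dots> = partial_weight E \<rho> (V - {r}) n
                   * (\<Prod>v\<in>V - {r}. if v \<in> desc E r then (1 - x) ^ n v else 1)"
    by (simp add: prod.distrib partial_weight_def tree_weight_def q_def)
  also have "(\<Prod>v\<in>V - {r}. if v \<in> desc E r then (1 - x) ^ n v else 1)
      = (\<Prod>v\<in>desc E r. (1 - x) ^ n v)"
  proof -
    have "{v \<in> V - {r}. v \<in> desc E r} = desc E r" using desc_root_subset by blast
    then show ?thesis
      using prod.inter_filter[of "V - {r}" "\<lambda>v. (1 - x) ^ n v" "\<lambda>v. v \<in> desc E r"] finite_V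
      by simp
  qed
  also have "(\<Prod>v\<in>desc E r. (1 - x) ^ n v) = (1 - x) ^ (\<Sum>u\<in>desc E r. n u)"
    by (rule power_sum[symmetric])
  finally show ?thesis by (simp only: x_def mult_ac)
qed

lemma root_ratio:
  defines "x \<equiv> \<rho> r / residual_capacity E \<rho> V r"
  shows "0 \<le> x" "x < 1" "norm_factor E \<rho> r = 1 / (1 - x)"
    and "x / (1 - x) = \<rho> r / (1 - path_load E \<rho> r)"
proof -
  define a where "a = residual_capacity E \<rho> V r"
  define c where "c = 1 - path_load E \<rho> r"
  have r_vertex: "r \<in> {1..m}" using V_sub r_in by blast
  have c_pos: "0 < c" and rho_r: "0 \<le> \<rho> r"
    using path_load_less_1 rho_nonneg r_vertex by (auto simp: c_def)
  have a: "a = c + \<rho> r"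
    by (simp add: a_def c_def residual_capacity_root path_load_eq)
  have one_minus_x: "1 - x = c / a"
    using c_pos rho_r by (simp add: x_def a_def[symmetric] a field_simps)
  show "0 \<le> x" "x < 1"
    using c_pos rho_r by (simp_all add: x_def a_def[symmetric] a field_simps)
  show "norm_factor E \<rho> r = 1 / (1 - x)"
    using one_minus_x a_def residual_capacity_root by (simp add: norm_factor_def c_def)
  show "x / (1 - x) = \<rho> r / (1 - path_load E \<rho> r)"
  proof -
    have "0 < a" using c_pos rho_r a by simp
    have "x / (1 - x) = (\<rho> r / a) / (c / a)"
      unfolding one_minus_x by (simp add: x_def a_def)
    also have "\<dots> = \<rho> r / c"
      using \<open>0 < a\<close> by simp
    finally show ?thesis by (simp add: c_def)
  qed
qed

lemma has_sum_partial_weight_root: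
  "((\<lambda>k. partial_weight E \<rho> V (n(r := k)))
     has_sum norm_factor E \<rho> r * partial_weight E \<rho> (V - {r}) n) UNIV"
proof -
  define x where "x = \<rho> r / residual_capacity E \<rho> V r"
  define t where "t = (\<Sum>u\<in>desc E r. n u)"
  define w where "w = (1 - x) ^ t * partial_weight E \<rho> (V - {r}) n"
  note x = root_ratio[folded x_def]
  have weight: "(\<lambda>k. partial_weight E \<rho> V (n(r := k))) = (\<lambda>k. x ^ k * real ((k + t) choose k) * w)"
    by (simp add: partial_weight_upd_root x_def t_def w_def)
  have "((\<lambda>k. x ^ k * real ((k + t) choose k) * w) has_sum 1 / (1 - x) ^ (t + 1) * w) UNIV"
    by (rule has_sum_cmult_left[OF negative_binomial_has_sum[OF x(1,2)]])
  moreover have "1 / (1 - x) ^ (t + 1) * w = norm_factor E \<rho> r * partial_weight E \<rho> (V - {r}) n"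
    using x(2) by (simp add: x(3) w_def field_simps)
  ultimately show ?thesis
    unfolding weight by simp
qed

lemma has_sum_partial_weight_root_mean:
  "((\<lambda>k. real k * partial_weight E \<rho> V (n(r := k)))
     has_sum norm_factor E \<rho> r * (\<rho> r / (1 - path_load E \<rho> r))
             * (partial_weight E \<rho> (V - {r}) n
                + (\<Sum>u\<in>desc E r. real (n u) * partial_weight E \<rho> (V - {r}) n))) UNIV"
proof -
  define x where "x = \<rho> r / residual_capacity E \<rho> V r"
  define t where "t = (\<Sum>u\<in>desc E r. n u)"
  define p where "p = partial_weight E \<rho> (V - {r}) n"
  note x = root_ratio[folded x_def]
  have weight: "(\<lambda>k. real k * partial_weight E \<rho> V (n(r := k)))
      = (\<lambda>k. real k * (x ^ k * real ((k + t) choose k)) * ((1 - x) ^ t * p))"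
    by (simp add: partial_weight_upd_root x_def t_def p_def mult_ac)
  have "((\<lambda>k. real k * (x ^ k * real ((k + t) choose k)) * ((1 - x) ^ t * p))
          has_sum x * real (t + 1) / (1 - x) ^ (t + 2) * ((1 - x) ^ t * p)) UNIV"
    by (rule has_sum_cmult_left[OF negative_binomial_mean_has_sum[OF x(1,2)]])
  moreover have "x * real (t + 1) / (1 - x) ^ (t + 2) * ((1 - x) ^ t * p)
      = 1 / (1 - x) * (x / (1 - x)) * (p + real t * p)"
  proof -
    have "(1 - x) ^ (t + 2) = (1 - x) ^ t * ((1 - x) * (1 - x))"
      by (simp add: power_add power2_eq_square)
    moreover have "(1 - x) ^ t \<noteq> 0" "1 - x \<noteq> 0" using x(2) by auto
    moreover have "\<And>q y :: real. q \<noteq> 0 \<Longrightarrow> y \<noteq> 0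
        \<Longrightarrow> x * real (t + 1) / (q * (y * y)) * (q * p) = 1 / y * (x / y) * (p + real t * p)"
      by (simp add: field_simps)
    ultimately show ?thesis by metis
  qed
  moreover have "real t * p = (\<Sum>u\<in>desc E r. real (n u) * p)"
    by (simp add: t_def sum_distrib_right)
  ultimately show ?thesis
    unfolding weight x(3,4)[symmetric] p_def by simp
qed

end

lemma states_on_empty: "states_on {} = {\<lambda>_. 0}"
  by (auto simp: states_on_def)

lemma has_sum_partial_weight:
  assumes "V \<subseteq> {1..m}" "desc_closed E V"
  shows "(partial_weight E \<rho> V has_sum (\<Prod>v\<in>V. norm_factor E \<rho> v)) (states_on V)"
proof -
  have "finite V" using assms(1) finite_subset by blast
  then show ?thesis using assms
  proof (induction V rule: finite_psubset_induct)
    case (psubset V)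
    show ?case
    proof (cases "V = {}")
      case True
      then show ?thesis
        by (simp add: states_on_empty partial_weight_def tree_weight_def has_sum_finite_iff)
    next
      case False
      then obtain r where r: "r \<in> V" "anc E r \<inter> V = {}"
        using exists_root psubset.hyps(1) by blast
      have IH: "(partial_weight E \<rho> (V - {r}) has_sum (\<Prod>v\<in>V - {r}. norm_factor E \<rho> v))
                  (states_on (V - {r}))"
        by (rule psubset.IH)
           (use r psubset.prems desc_closed_remove_root[OF psubset.prems(2) r(2)] in auto)
      have inner: "((\<lambda>k. partial_weight E \<rho> V (n(r := k)))
                     has_sum norm_factor E \<rho> r * partial_weight E \<rho> (V - {r}) n) UNIV" for n
        by (rule has_sum_partial_weight_root[OF psubset.prems r])
      have "(partial_weight E \<rho> V has_sum norm_factor E \<rho> r * (\<Prod>v\<in>V - {r}. norm_factor E \<rho> v))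
              (states_on V)"
        by (rule has_sum_states_on_remove[OF r(1) _ inner has_sum_cmult_right[OF IH]])
           (use psubset.prems partial_weight_nonneg in auto)
      then show ?thesis
        using r psubset.hyps(1) by (simp add: prod.remove)
    qed
  qed
qed

lemma has_sum_partial_weight_mean_root:
  assumes V: "V \<subseteq> {1..m}" "desc_closed E V" and r: "r \<in> V" "anc E r \<inter> V = {}"
    and IH: "\<And>u. u \<in> desc E r \<Longrightarrow> ((\<lambda>n. real (n u) * partial_weight E \<rho> (V - {r}) n)
               has_sum (\<Prod>w\<in>V - {r}. norm_factor E \<rho> w) * mean_flows E \<rho> u) (states_on (V - {r}))"
  shows "((\<lambda>n. real (n r) * partial_weight E \<rho> V n)
           has_sum (\<Prod>u\<in>V. norm_factor E \<rho> u) * mean_flows E \<rho> r) (states_on V)"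
proof -
  define C' where "C' = (\<Prod>u\<in>V - {r}. norm_factor E \<rho> u)"
  define K where "K = norm_factor E \<rho> r * (\<rho> r / (1 - path_load E \<rho> r))"
  have V': "V - {r} \<subseteq> {1..m}" "desc_closed E (V - {r})"
    using V(1) desc_closed_remove_root[OF V(2) r(2)] by auto
  have "((\<lambda>n. partial_weight E \<rho> (V - {r}) n
              + (\<Sum>u\<in>desc E r. real (n u) * partial_weight E \<rho> (V - {r}) n))
          has_sum C' + (\<Sum>u\<in>desc E r. C' * mean_flows E \<rho> u)) (states_on (V - {r}))"
    unfolding C'_def
    by (intro has_sum_add has_sum_sum has_sum_partial_weight[OF V'] finite_desc IH)
  then have outer: "((\<lambda>n. K * (partial_weight E \<rho> (V - {r}) n
              + (\<Sum>u\<in>desc E r. real (n u) * partial_weight E \<rho> (V - {r}) n)))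
          has_sum K * (C' + (\<Sum>u\<in>desc E r. C' * mean_flows E \<rho> u))) (states_on (V - {r}))"
    by (rule has_sum_cmult_right)
  have "K * (C' + (\<Sum>u\<in>desc E r. C' * mean_flows E \<rho> u))
      = norm_factor E \<rho> r * C'
        * (\<rho> r / (1 - path_load E \<rho> r) * (1 + (\<Sum>u\<in>desc E r. mean_flows E \<rho> u)))"
    by (simp add: K_def sum_distrib_left[symmetric] algebra_simps)
  also have "\<dots> = (\<Prod>u\<in>V. norm_factor E \<rho> u) * mean_flows E \<rho> r"
  proof -
    have r_vertex: "r \<in> {1..m}" using V(1) r(1) by blast
    show ?thesis
      unfolding mean_flows_eq[OF r_vertex, symmetric] using r(1) finite_subset[OF V(1)]
      by (simp add: C'_def prod.remove)
  qed
  finally have total: "K * (C' + (\<Sum>u\<in>desc E r. C' * mean_flows E \<rho> u))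
      = (\<Prod>u\<in>V. norm_factor E \<rho> u) * mean_flows E \<rho> r" .
  show ?thesis
    unfolding total[symmetric]
    by (rule has_sum_states_on_remove[OF r(1) _ _ outer])
       (use has_sum_partial_weight_root_mean[OF V r] partial_weight_nonneg[OF V(1)] in \<open>simp_all add: K_def\<close>)
qed

lemma has_sum_partial_weight_mean:
  assumes "V \<subseteq> {1..m}" "desc_closed E V" "v \<in> V"
  shows "((\<lambda>n. real (n v) * partial_weight E \<rho> V n)
           has_sum (\<Prod>u\<in>V. norm_factor E \<rho> u) * mean_flows E \<rho> v) (states_on V)"
proof -
  have "finite V" using assms(1) finite_subset by blast
  then show ?thesis using assms
  proof (induction V arbitrary: v rule: finite_psubset_induct)
    case (psubset V)
    obtain r where r: "r \<in> V" "anc E r \<inter> V = {}"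
      using exists_root psubset.hyps(1) psubset.prems(3) by blast
    have IH: "((\<lambda>n. real (n u) * partial_weight E \<rho> (V - {r}) n)
               has_sum (\<Prod>w\<in>V - {r}. norm_factor E \<rho> w) * mean_flows E \<rho> u) (states_on (V - {r}))"
      if "u \<in> V - {r}" for u
      by (rule psubset.IH)
         (use r that psubset.prems desc_closed_remove_root[OF psubset.prems(2) r(2)] in auto)
    show ?case
    proof (cases "v = r")
      case True
      then show ?thesis
        using has_sum_partial_weight_mean_root[OF psubset.prems(1,2) r] IH
          desc_root_subset[OF psubset.prems(1,2) r] by blast
    next
      case False
      have "((\<lambda>n. norm_factor E \<rho> r * (real (n v) * partial_weight E \<rho> (V - {r}) n))
          has_sum norm_factor E \<rho> r * ((\<Prod>w\<in>V - {r}. norm_factor E \<rho> w) * mean_flows E \<rho> v))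
          (states_on (V - {r}))"
        using False psubset.prems(3) by (intro has_sum_cmult_right IH) simp
      then have "((\<lambda>n. real (n v) * partial_weight E \<rho> V n)
          has_sum norm_factor E \<rho> r * ((\<Prod>w\<in>V - {r}. norm_factor E \<rho> w) * mean_flows E \<rho> v))
          (states_on V)"
        using has_sum_partial_weight_root[OF psubset.prems(1,2) r] False partial_weight_nonneg[OF psubset.prems(1)]
        by (intro has_sum_states_on_remove[OF r(1)]) (simp_all add: has_sum_cmult_right mult_ac)
      then show ?thesis
        using r(1) psubset.hyps(1) by (simp add: prod.remove mult_ac)
    qed
  qed
qed

end

section \<open>Transition rates and detailed balance\<close>

lemma binomial_Suc_Suc_ratio:
  "real (Suc s choose Suc k) * real (Suc k) / real (Suc s) = real (s choose k)"
  using Suc_times_binomial_eq[of s k] by (simp add: field_simps flip: of_nat_mult del: of_nat_Suc)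

lemma binomial_Suc_ratio:
  assumes "k \<le> s"
  shows "real (Suc s choose k) * (real (Suc s) - real k) / real (Suc s) = real (s choose k)"
proof -
  have "(Suc s - k) * (Suc s choose k) = Suc s * (s choose k)"
    using binomial_absorb_comp[of "Suc s" k] by simp
  then have "(real (Suc s) - real k) * real (Suc s choose k) = real (Suc s) * real (s choose k)"
    using assms by (metis of_nat_diff of_nat_mult le_SucI)
  then show ?thesis by (simp add: field_simps del: of_nat_Suc)
qed

lemma rate_up:
  assumes "v \<in> {1..m}"
  shows "rate m E lam r n (n(v := Suc (n v))) = lam v"
proof -
  have "n(v := Suc (n v)) = n(w := Suc (n w)) \<longleftrightarrow> w = v" for w
    by (auto simp: fun_eq_iff)
  moreover have "n(v := Suc (n v)) \<noteq> n(w := n w - 1)" for w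
    by (auto simp: fun_eq_iff)
  ultimately show ?thesis
    using assms by (simp add: rate_def)
qed

lemma rate_down:
  assumes "v \<in> {1..m}"
  shows "rate m E lam r (n(v := Suc (n v))) n = r v * pf_alloc E v (n(v := Suc (n v)))"
proof -
  have "n \<noteq> (n(v := Suc (n v)))(w := Suc ((n(v := Suc (n v))) w))" for w
    by (auto simp: fun_eq_iff)
  moreover have "1 \<le> (n(v := Suc (n v))) w \<and> n = (n(v := Suc (n v)))(w := (n(v := Suc (n v))) w - 1)
      \<longleftrightarrow> w = v" for w
    by (auto simp: fun_eq_iff)
  ultimately show ?thesis
    using assms by (simp add: rate_def)
qed

lemma rate_nonzero_imp_adjacent:
  assumes "rate m E lam r n n' \<noteq> 0"
  shows "n' = n \<or> (\<exists>v\<in>{1..m}. n' = n(v := Suc (n v))) \<or> (\<exists>v\<in>{1..m}. n = n'(v := Suc (n' v)))"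
proof -
  obtain w where "w \<in> {1..m}"
    and "(if n' = n(w := Suc (n w)) then lam w else 0)
         + (if 1 \<le> n w \<and> n' = n(w := n w - 1) then r w * pf_alloc E w n else 0) \<noteq> 0"
    using sum.not_neutral_contains_not_neutral[OF assms[unfolded rate_def]] by blast
  moreover have "n = n'(w := Suc (n' w))" if "1 \<le> n w" "n' = n(w := n w - 1)"
    using that by (auto simp: fun_eq_iff)
  ultimately show ?thesis by (auto split: if_splits)
qed

lemma rate_summable: "rate m E lam r n summable_on A"
proof -
  define F where "F = insert n ((\<lambda>w. n(w := Suc (n w))) ` {1..m} \<union> (\<lambda>w. n(w := n w - 1)) ` {1..m})"
  have "n' \<in> F" if "rate m E lam r n n' \<noteq> 0" for n'
  proof -
    have "n' = n(w := n w - 1)" if "n = n'(w := Suc (n' w))" for w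
      using that by (auto simp: fun_eq_iff)
    then show ?thesis
      using rate_nonzero_imp_adjacent[OF that] unfolding F_def by blast
  qed
  then have "(rate m E lam r n has_sum (\<Sum>n'\<in>F \<inter> A. rate m E lam r n n')) A"
    by (intro has_sum_finite_neutralI) (auto simp: F_def)
  then show ?thesis by (rule has_sum_imp_summable)
qed

lemma global_balance_of_detailed_balance:
  fixes \<pi> :: "'a \<Rightarrow> real" and q :: "'a \<Rightarrow> 'a \<Rightarrow> real"
  assumes "\<And>n'. n' \<in> A \<Longrightarrow> \<pi> n' * q n' n = \<pi> n * q n n'" and "q n summable_on A"
  shows "((\<lambda>n'. \<pi> n' * q n' n) has_sum \<pi> n * infsum (q n) A) A"
proof -
  have "((\<lambda>n'. \<pi> n * q n n') has_sum \<pi> n * infsum (q n) A) A"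
    by (intro has_sum_cmult_right has_sum_infsum assms(2))
  also have "?this \<longleftrightarrow> ?thesis"
    by (intro has_sum_cong) (simp add: assms(1))
  finally show ?thesis .
qed

lemma pf_stat_eq_tree_weight: "pf_stat m E \<rho> n = tree_weight {1..m} E \<rho> n / cnorm m E \<rho>"
  by (simp add: pf_stat_def tree_weight_def subtree_count_def)

context rooted_tree
begin

lemma le_subtree_count: "n v \<le> subtree_count E n v"
  unfolding subtree_count_def by (rule member_le_sum) (simp_all add: descb_def finite_desc)

lemma subtree_count_upd_Suc:
  "subtree_count E (n(v := Suc (n v))) u = subtree_count E n u + (if u \<in> ancb E v then 1 else 0)"
proof -
  have "subtree_count E (n(v := Suc (n v))) u = (\<Sum>w\<in>descb E u. n w + (if w = v then 1 else 0))"
    unfolding subtree_count_def by (rule sum.cong) auto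
  then show ?thesis
    by (simp add: sum.distrib finite_descb subtree_count_def mem_descb_iff_mem_ancb)
qed

lemma pf_alloc_eq:
  assumes "1 \<le> n v"
  shows "pf_alloc E v n = real (n v) / real (subtree_count E n v)
    * (\<Prod>a\<in>anc E v. (real (subtree_count E n a) - real (n a)) / real (subtree_count E n a))"
proof -
  have desc_sum: "(\<Sum>u\<in>desc E a. real (n u)) = real (subtree_count E n a) - real (n a)" for a
    using not_desc_self[of a] finite_desc[of a] by (simp add: subtree_count_def descb_def)
  have descb_sum: "(\<Sum>u\<in>descb E a. real (n u)) = real (subtree_count E n a)" for a
    by (simp add: subtree_count_def)
  show ?thesis
    using assms by (simp add: pf_alloc_def desc_sum descb_sum)
qed

lemma pf_alloc_pos:
  assumes "1 \<le> n v"
  shows "0 < pf_alloc E v n"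
proof -
  have "0 < (real (subtree_count E n a) - real (n a)) / real (subtree_count E n a)"
    if "a \<in> anc E v" for a
  proof -
    have "v \<in> desc E a" using that by (simp add: anc_def desc_def)
    then have "n a + n v \<le> subtree_count E n a"
      using not_desc_self[of a] finite_desc[of a]
      by (simp add: subtree_count_def descb_def member_le_sum)
    then show ?thesis using assms by (auto intro!: divide_pos_pos)
  qed
  moreover have "0 < real (n v) / real (subtree_count E n v)"
    using assms le_subtree_count[of n v] by (auto intro!: divide_pos_pos)
  ultimately show ?thesis
    unfolding pf_alloc_eq[of n v, OF assms] by (intro mult_pos_pos prod_pos) auto
qed

lemma pf_alloc_upd_Suc:
  "pf_alloc E v (n(v := Suc (n v)))
   = real (Suc (n v)) / real (Suc (subtree_count E n v))
     * (\<Prod>a\<in>anc E v. (real (Suc (subtree_count E n a)) - real (n a)) / real (Suc (subtree_count E n a)))"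
proof -
  have "(\<Prod>a\<in>anc E v. (real (subtree_count E (n(v := Suc (n v))) a) - real ((n(v := Suc (n v))) a))
                       / real (subtree_count E (n(v := Suc (n v))) a))
      = (\<Prod>a\<in>anc E v. (real (Suc (subtree_count E n a)) - real (n a)) / real (Suc (subtree_count E n a)))"
    using not_anc_self[of v] by (intro prod.cong) (auto simp: subtree_count_upd_Suc ancb_def)
  then show ?thesis
    by (simp add: pf_alloc_eq subtree_count_upd_Suc ancb_def)
qed

lemma tree_weight_upd_Suc:
  assumes "v \<in> {1..m}"
  shows "tree_weight {1..m} E \<rho> (n(v := Suc (n v))) * pf_alloc E v (n(v := Suc (n v)))
       = \<rho> v * tree_weight {1..m} E \<rho> n"
proof -
  define n' where "n' = n(v := Suc (n v))"
  define S where "S u = subtree_count E n u" for u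
  define c where "c u = (if u = v then real (Suc (n v)) / real (Suc (S v))
      else if u \<in> anc E v then (real (Suc (S u)) - real (n u)) / real (Suc (S u)) else 1)" for u
  have n'_apply: "n' u = (if u = v then Suc (n v) else n u)" for u
    by (simp add: n'_def)
  have count: "subtree_count E n' u = (if u \<in> ancb E v then Suc (S u) else S u)" for u
    by (simp add: n'_def S_def subtree_count_upd_Suc)
  have v_notin: "v \<notin> anc E v" by (rule not_anc_self)
  have "(\<Prod>a\<in>anc E v. c a)
      = (\<Prod>a\<in>anc E v. (real (Suc (S a)) - real (n a)) / real (Suc (S a)))"
    using v_notin by (intro prod.cong) (auto simp: c_def)
  then have "pf_alloc E v n' = (\<Prod>u\<in>ancb E v. c u)"
    using v_notin finite_anc[of v] by (simp add: n'_def pf_alloc_upd_Suc ancb_def c_def S_def)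
  also have "\<dots> = (\<Prod>u\<in>{1..m}. c u)"
    using assms anc_subset[of v] by (intro prod.mono_neutral_left) (auto simp: c_def ancb_def)
  finally have alloc: "pf_alloc E v n' = (\<Prod>u\<in>{1..m}. c u)" .
  have factor: "\<rho> u ^ n' u * real (subtree_count E n' u choose n' u) * c u
      = (if u = v then \<rho> v else 1) * (\<rho> u ^ n u * real (S u choose n u))" for u
  proof -
    consider "u = v" | "u \<in> anc E v" | "u \<notin> ancb E v"
      by (auto simp: ancb_def)
    then show ?thesis
    proof cases
      case 1
      then show ?thesis
        using binomial_Suc_Suc_ratio[of "S v" "n v"]
        by (simp add: count c_def n'_apply ancb_def field_simps del: of_nat_Suc binomial_Suc_Suc)
    next
      case 2
      then show ?thesis
        using binomial_Suc_ratio[OF le_subtree_count[of n u, folded S_def]] v_notin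
        by (auto simp: count c_def n'_apply ancb_def field_simps simp del: of_nat_Suc)
    next
      case 3
      then show ?thesis by (auto simp: count c_def n'_apply ancb_def)
    qed
  qed
  have "tree_weight {1..m} E \<rho> n' * pf_alloc E v n'
      = (\<Prod>u\<in>{1..m}. (if u = v then \<rho> v else 1) * (\<rho> u ^ n u * real (S u choose n u)))"
    unfolding alloc tree_weight_def factor[symmetric] by (simp add: prod.distrib)
  also have "\<dots> = \<rho> v * tree_weight {1..m} E \<rho> n"
    using assms by (simp add: prod.distrib tree_weight_def S_def)
  finally show ?thesis by (simp add: n'_def)
qed

lemma pf_stat_detailed_balance:
  assumes r_pos: "\<forall>v\<in>{1..m}. 0 < r v"
  shows "pf_stat m E (\<lambda>v. lam v / r v) n * rate m E lam r n n'
       = pf_stat m E (\<lambda>v. lam v / r v) n' * rate m E lam r n' n"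
proof -
  define W where "W = tree_weight {1..m} E (\<lambda>v. lam v / r v)"
  have step: "W x * rate m E lam r x (x(v := Suc (x v)))
      = W (x(v := Suc (x v))) * rate m E lam r (x(v := Suc (x v))) x" if "v \<in> {1..m}" for x v
  proof -
    have "W (x(v := Suc (x v))) * rate m E lam r (x(v := Suc (x v))) x
        = r v * (W (x(v := Suc (x v))) * pf_alloc E v (x(v := Suc (x v))))"
      by (simp add: rate_down[OF that] mult_ac)
    also have "\<dots> = r v * (lam v / r v) * W x"
      unfolding W_def tree_weight_upd_Suc[OF that] by simp
    also have "\<dots> = W x * rate m E lam r x (x(v := Suc (x v)))"
      using r_pos that by (simp add: rate_up[OF that] less_imp_neq[symmetric])
    finally show ?thesis ..
  qed
  have "W n * rate m E lam r n n' = W n' * rate m E lam r n' n"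
  proof (cases "rate m E lam r n n' = 0 \<and> rate m E lam r n' n = 0")
    case False
    then have "n' = n \<or> (\<exists>v\<in>{1..m}. n' = n(v := Suc (n v))) \<or> (\<exists>v\<in>{1..m}. n = n'(v := Suc (n' v)))"
      using rate_nonzero_imp_adjacent by metis
    then show ?thesis using step by auto
  qed simp
  then show ?thesis
    by (simp add: pf_stat_eq_tree_weight W_def)
qed

lemma rtrancl_rate_zero:
  assumes lam_pos: "\<forall>v\<in>{1..m}. 0 < lam v" and r_pos: "\<forall>v\<in>{1..m}. 0 < r v"
    and "n \<in> states m"
  defines "R \<equiv> {(x, y). x \<in> states m \<and> y \<in> states m \<and> rate m E lam r x y > 0}"
  shows "(n, \<lambda>_. 0) \<in> R\<^sup>* \<and> (\<lambda>_. 0, n) \<in> R\<^sup>*"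
  using assms(3)
proof (induction "sum n {1..m}" arbitrary: n rule: less_induct)
  case less
  show ?case
  proof (cases "\<forall>v\<in>{1..m}. n v = 0")
    case True
    then have "n = (\<lambda>_. 0)" using less.prems by (auto simp: states_def fun_eq_iff)
    then show ?thesis by simp
  next
    case False
    then obtain v where v: "v \<in> {1..m}" "1 \<le> n v" by auto
    define n' where "n' = n(v := n v - 1)"
    have n'_state: "n' \<in> states m" using less.prems by (auto simp: states_def n'_def)
    have n: "n = n'(v := Suc (n' v))" using v by (auto simp: n'_def fun_eq_iff)
    have "sum n' {1..m} < sum n {1..m}"
      by (rule sum_strict_mono_ex1) (use v in \<open>auto simp: n'_def\<close>)
    then have IH: "(n', \<lambda>_. 0) \<in> R\<^sup>* \<and> (\<lambda>_. 0, n') \<in> R\<^sup>*"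
      using less.hyps n'_state by blast
    have "rate m E lam r n n' > 0"
      using rate_down[OF v(1), of E lam r n', folded n] pf_alloc_pos[of n v, OF v(2)] r_pos v(1) by simp
    moreover have "rate m E lam r n' n > 0"
      using rate_up[OF v(1), of E lam r n'] lam_pos v n by simp
    ultimately have "(n, n') \<in> R" "(n', n) \<in> R"
      using less.prems n'_state by (auto simp: R_def)
    with IH show ?thesis by (meson converse_rtrancl_into_rtrancl rtrancl.rtrancl_into_rtrancl)
  qed
qed

lemma rate_irreducible:
  assumes "\<forall>v\<in>{1..m}. 0 < lam v" and "\<forall>v\<in>{1..m}. 0 < r v"
  shows "\<forall>n\<in>states m. \<forall>n'\<in>states m.
           (n, n') \<in> {(x, y). x \<in> states m \<and> y \<in> states m \<and> rate m E lam r x y > 0}\<^sup>*"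
  using rtrancl_rate_zero[OF assms] by (meson rtrancl_trans)

lemma pf_stat_global_balance:
  assumes "\<forall>v\<in>{1..m}. 0 < r v"
  shows "((\<lambda>n'. pf_stat m E (\<lambda>v. lam v / r v) n' * rate m E lam r n' n)
           has_sum pf_stat m E (\<lambda>v. lam v / r v) n * infsum (rate m E lam r n) A) A"
  by (intro global_balance_of_detailed_balance rate_summable pf_stat_detailed_balance[OF assms])

end

section \<open>The stationary distribution\<close>

lemma states_eq_states_on: "states m = states_on {1..m}"
  by (simp add: states_def states_on_def)

lemma cnorm_eq_prod_norm_factor: "cnorm m E \<rho> = (\<Prod>v\<in>{1..m}. norm_factor E \<rho> v)"
  by (simp add: cnorm_def norm_factor_def path_load_def)

context stable_tree
begin

lemma partial_weight_vertices: "partial_weight E \<rho> {1..m} = tree_weight {1..m} E \<rho>"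
proof -
  have "residual_capacity E \<rho> {1..m} v = 1" for v
    unfolding residual_capacity_def by (metis Diff_eq_empty_iff anc_subset diff_zero sum.empty)
  then show ?thesis by (simp add: partial_weight_def)
qed

lemma pf_stat_eq_partial_weight:
  "pf_stat m E \<rho> = (\<lambda>n. partial_weight E \<rho> {1..m} n / (\<Prod>v\<in>{1..m}. norm_factor E \<rho> v))"
  unfolding partial_weight_vertices cnorm_eq_prod_norm_factor[symmetric]
  by (simp add: fun_eq_iff pf_stat_eq_tree_weight)

lemma prod_norm_factor_pos: "0 < (\<Prod>v\<in>{1..m}. norm_factor E \<rho> v)"
  unfolding norm_factor_def
  using anc_load_less_1 path_load_less_1 by (intro prod_pos divide_pos_pos) auto

lemma prod_norm_factor_nonzero: "(\<Prod>v\<in>{1..m}. norm_factor E \<rho> v) \<noteq> 0"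
  using prod_norm_factor_pos by linarith

lemma has_sum_pf_stat: "(pf_stat m E \<rho> has_sum 1) (states m)"
  unfolding pf_stat_eq_partial_weight states_eq_states_on
  using has_sum_divide_const[where c = "\<Prod>v\<in>{1..m}. norm_factor E \<rho> v",
      OF has_sum_partial_weight[OF subset_refl desc_closed_vertices]]
  by (simp only: divide_self[OF prod_norm_factor_nonzero])

lemma has_sum_pf_stat_mean:
  assumes "v \<in> {1..m}"
  shows "((\<lambda>n. real (n v) * pf_stat m E \<rho> n) has_sum mean_flows E \<rho> v) (states m)"
  unfolding pf_stat_eq_partial_weight states_eq_states_on
  using has_sum_divide_const[where c = "\<Prod>v\<in>{1..m}. norm_factor E \<rho> v",
      OF has_sum_partial_weight_mean[OF subset_refl desc_closed_vertices assms]]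
  by (simp only: nonzero_mult_div_cancel_left[OF prod_norm_factor_nonzero] times_divide_eq_right)

lemma pf_stat_pos:
  assumes "\<And>v. v \<in> {1..m} \<Longrightarrow> 0 < \<rho> v"
  shows "0 < pf_stat m E \<rho> n"
  unfolding pf_stat_eq_tree_weight tree_weight_def cnorm_eq_prod_norm_factor
  by (intro divide_pos_pos[OF prod_pos prod_norm_factor_pos]) (use assms le_subtree_count in auto)

end

theorem theorem2:
  fixes m :: nat and E :: "(nat \<times> nat) set" and lam r :: "nat \<Rightarrow> real"
  assumes tree: "is_rooted_tree m E"
    and lam_pos: "\<forall>v\<in>{1..m}. lam v > 0"
    and r_pos: "\<forall>v\<in>{1..m}. r v > 0"
    and load: "\<forall>v\<in>{1..m}. (\<Sum>u\<in>ancb E v. lam u / r u) < 1"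
  shows
    \<comment> \<open>irreducibility of the chain on N^V\<close>
    "(\<forall>n\<in>states m. \<forall>n'\<in>states m.
        (n, n') \<in> {(x, y). x \<in> states m \<and> y \<in> states m \<and> rate m E lam r x y > 0}\<^sup>*)
   \<and> \<comment> \<open>pi is a probability distribution with full support\<close>
     (\<forall>n\<in>states m. pf_stat m E (\<lambda>v. lam v / r v) n > 0)
   \<and> (pf_stat m E (\<lambda>v. lam v / r v) has_sum 1) (states m)
   \<and> \<comment> \<open>reversibility: detailed balance\<close>
     (\<forall>n\<in>states m. \<forall>n'\<in>states m.
        pf_stat m E (\<lambda>v. lam v / r v) n * rate m E lam r n n'
      = pf_stat m E (\<lambda>v. lam v / r v) n' * rate m E lam r n' n)
   \<and> \<comment> \<open>stationarity: global balance\<close>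
     (\<forall>n\<in>states m.
        ((\<lambda>n'. pf_stat m E (\<lambda>v. lam v / r v) n' * rate m E lam r n' n) has_sum
           (pf_stat m E (\<lambda>v. lam v / r v) n * infsum (rate m E lam r n) (states m - {n})))
        (states m - {n}))
   \<and> \<comment> \<open>mean number of flows in stationarity\<close>
     (\<forall>v\<in>{1..m}.
        ((\<lambda>n. real (n v) * pf_stat m E (\<lambda>v. lam v / r v) n) has_sum
           (lam v / r v * (\<Sum>u\<in>descb E v.
               (1 - real (nchild E u)) / (1 - (\<Sum>w\<in>ancb E u. lam w / r w))))) (states m))
   \<and> \<comment> \<open>flow throughput psi_v = lam_v / E[N_v]\<close>
     (\<forall>v\<in>{1..m}.
        lam v / (\<Sum>\<^sub>\<infinity>n\<in>states m. real (n v) * pf_stat m E (\<lambda>v. lam v / r v) n)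
      = r v / (\<Sum>u\<in>descb E v.
               (1 - real (nchild E u)) / (1 - (\<Sum>w\<in>ancb E u. lam w / r w))))"
proof -
  define \<rho> where "\<rho> = (\<lambda>v. lam v / r v)"
  interpret stable_tree m E \<rho>
    by unfold_locales (use tree lam_pos r_pos load in \<open>auto simp: \<rho>_def path_load_def less_imp_le\<close>)
  have positive: "0 < pf_stat m E \<rho> n" for n
    using lam_pos r_pos by (intro pf_stat_pos) (simp add: \<rho>_def)
  have mean: "((\<lambda>n. real (n v) * pf_stat m E \<rho> n) has_sum lam v / r v * (\<Sum>u\<in>descb E v.
      (1 - real (nchild E u)) / (1 - (\<Sum>w\<in>ancb E u. \<rho> w)))) (states m)" if "v \<in> {1..m}" for v
    using has_sum_pf_stat_mean[OF that] by (simp add: mean_flows_def path_load_def \<rho>_def)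
  have throughput: "lam v / (\<Sum>\<^sub>\<infinity>n\<in>states m. real (n v) * pf_stat m E \<rho> n)
      = r v / (\<Sum>u\<in>descb E v. (1 - real (nchild E u)) / (1 - (\<Sum>w\<in>ancb E u. \<rho> w)))"
    if "v \<in> {1..m}" for v
  proof -
    have "0 < lam v" "0 < r v" using lam_pos r_pos that by blast+
    then show ?thesis using infsumI[OF mean[OF that]] by (simp flip: divide_divide_eq_left)
  qed
  show ?thesis
    unfolding \<rho>_def[symmetric]
    by (intro conjI ballI rate_irreducible[OF lam_pos r_pos, rule_format] positive has_sum_pf_stat
        pf_stat_detailed_balance[OF r_pos, of lam, folded \<rho>_def]
        pf_stat_global_balance[OF r_pos, of lam, folded \<rho>_def]
        mean throughput)
qed

end
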